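(* Let $X$ be a Banach lattice and $S$ a convex $C_0$-semigroup on $X$. Then the map $[0,\infty)\to X$, $t\mapsto S(t)x$ is continuous for every $x\in X$.
   Context: An operator $T\colon X\to X$ is convex if $T(\lambda x+(1-\lambda)y)\le\lambda Tx+(1-\lambda)Ty$ for all $x,y\in X$, $\lambda\in[0,1]$, and bounded if $\sup_{\|x\|\le r}\|Tx\|<\infty$ for all $r>0$. A convex $C_0$-semigroup is a family $(S(t))_{t\ge0}$ of bounded convex operators $X\to X$ with $S(0)=\mathrm{id}$, $S(t+s)=S(t)S(s)$ for all $s,t\ge0$, and $S(t)x\to x$ as $t\downarrow0$ for all $x$. *)

theory Defs
  imports "HOL-Analysis.Analysis"
begin

class banach_lattice = banach + ordered_real_vector + lattice +
  assumes norm_lattice_mono: "sup x (- x) \<le> sup y (- y) \<Longrightarrow> norm x \<le> norm y"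

definition convex_op :: "('a::{real_vector, ord} \<Rightarrow> 'a) \<Rightarrow> bool" where
  "convex_op T \<longleftrightarrow> (\<forall>x y. \<forall>l::real. 0 \<le> l \<and> l \<le> 1 \<longrightarrow>
      T (l *\<^sub>R x + (1 - l) *\<^sub>R y) \<le> l *\<^sub>R T x + (1 - l) *\<^sub>R T y)"

definition bounded_op :: "('a::real_normed_vector \<Rightarrow> 'b::real_normed_vector) \<Rightarrow> bool" where
  "bounded_op T \<longleftrightarrow> (\<forall>r>0. \<exists>M. \<forall>x. norm x \<le> r \<longrightarrow> norm (T x) \<le> M)"

text \<open>Convex C_0-semigroup, indexed by t \<ge> 0 (values of S at negative t are irrelevant).\<close>
definition convex_C0_semigroup :: "(real \<Rightarrow> 'a::banach_lattice \<Rightarrow> 'a) \<Rightarrow> bool" where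
  "convex_C0_semigroup S \<longleftrightarrow>
     (\<forall>t\<ge>0. convex_op (S t) \<and> bounded_op (S t)) \<and>
     S 0 = id \<and>
     (\<forall>s\<ge>0. \<forall>t\<ge>0. S (t + s) = S t \<circ> S s) \<and>
     (\<forall>x. ((\<lambda>t. S t x) \<longlongrightarrow> x) (at_right 0))"

end

(*
  A convex operator T that is bounded by M on a ball is Lipschitz on every smaller ball: for
  x, y inside, convexity along the line through y and x gives T x - T y <= l (T z - T y) for a
  point z further out, and in a Banach lattice a two-sided order bound a <= b <= c controls
  norm b by norm a + norm c.  So each S(t) is continuous, and with the strong continuity at 0
  this gives right continuity of t |-> S(t) x.

  For left continuity, Baire's theorem applied to the closed sets
  {y. norm (S s y) <= n for 0 <= s <= 1/(n+1)} gives a ball on which all S(s), s small, are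
  uniformly bounded; convexity (x is the midpoint of a point of that ball and its reflection)
  transports the bound to a ball around any x.  Hence the S(s), 0 <= s <= delta, are uniformly
  Lipschitz near x, and S(t) x - S(s) x = S(s) (S(t - s) x) - S(s) x tends to 0 as s increases
  to t.
*)

theory Submission
  imports Defs
begin

lemma sup_neg_nonneg: "0 \<le> sup a (- a :: 'a::{ordered_real_vector, lattice})"
proof -
  have "0 \<le> sup a (- a) + sup a (- a)"
    using add_mono[OF sup.cobounded1 sup.cobounded2, of a "- a"] by simp
  then have "(1/2::real) *\<^sub>R 0 \<le> (1/2::real) *\<^sub>R (sup a (- a) + sup a (- a))"
    by (rule scaleR_left_mono) simp
  then show ?thesis by (simp add: scaleR_2[symmetric])
qed

lemma sup_neg_eq_self: "0 \<le> p \<Longrightarrow> sup p (- p) = (p :: 'a::{ordered_ab_group_add, lattice})"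
  by (simp add: sup.absorb1 order.trans[of "- p" 0 p])

lemma norm_sup_neg: "norm (sup a (- a)) = norm (a :: 'a::banach_lattice)"
  using norm_lattice_mono[of "sup a (- a)" a] norm_lattice_mono[of a "sup a (- a)"]
  by (simp add: sup_neg_eq_self[OF sup_neg_nonneg])

lemma norm_le_norm_add_if_between:
  fixes a b c :: "'a::banach_lattice"
  assumes "a \<le> b" "b \<le> c"
  shows "norm b \<le> norm a + norm c"
proof -
  let ?p = "sup a (- a) + sup c (- c)"
  have "b \<le> ?p"
    using assms(2) sup.cobounded1[of c "- c"] sup_neg_nonneg[of a]
    by (metis add_increasing order.trans)
  moreover have "- b \<le> ?p"
    using assms(1) sup.cobounded2[of "- a" a] sup_neg_nonneg[of c]
    by (metis add_increasing2 neg_le_iff_le order.trans sup_commute)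
  ultimately have "sup b (- b) \<le> ?p" by simp
  also have "?p = sup ?p (- ?p)"
    by (rule sup_neg_eq_self[symmetric]) (simp add: add_nonneg_nonneg sup_neg_nonneg)
  finally have "norm b \<le> norm ?p" by (rule norm_lattice_mono)
  also have "\<dots> \<le> norm a + norm c"
    using norm_triangle_ineq[of "sup a (- a)" "sup c (- c)"] by (simp add: norm_sup_neg)
  finally show ?thesis .
qed

lemma convex_opD:
  "convex_op T \<Longrightarrow> 0 \<le> l \<Longrightarrow> l \<le> 1 \<Longrightarrow>
    T (l *\<^sub>R x + (1 - l) *\<^sub>R y) \<le> l *\<^sub>R T x + (1 - l) *\<^sub>R T y"
  by (simp add: convex_op_def)

lemma convex_op_diff_le:
  fixes T :: "'a::ordered_real_vector \<Rightarrow> 'a"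
  assumes "convex_op T" "0 \<le> l" "l \<le> 1" "x = l *\<^sub>R z + (1 - l) *\<^sub>R y"
  shows "T x - T y \<le> l *\<^sub>R (T z - T y)"
proof -
  have "T x \<le> l *\<^sub>R T z + (1 - l) *\<^sub>R T y"
    using convex_opD[OF assms(1-3)] assms(4) by simp
  then show ?thesis by (simp add: algebra_simps)
qed

lemma convex_op_midpoint:
  fixes T :: "'a::ordered_real_vector \<Rightarrow> 'a"
  assumes "convex_op T" "a + b = 2 *\<^sub>R x"
  shows "2 *\<^sub>R T x \<le> T a + T b"
proof -
  have "x = (1/2) *\<^sub>R a + (1 - 1/2) *\<^sub>R b"
    using arg_cong[OF assms(2), of "scaleR (1/2)"] by (simp add: scaleR_add_right)
  then have "T x \<le> (1/2) *\<^sub>R T a + (1 - 1/2) *\<^sub>R T b"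
    using convex_opD[OF assms(1), of "1/2" a b] by simp
  then have "2 *\<^sub>R T x \<le> 2 *\<^sub>R ((1/2) *\<^sub>R T a + (1/2) *\<^sub>R T b)"
    by (intro scaleR_left_mono) simp_all
  then show ?thesis by (simp add: scaleR_add_right)
qed

lemma convex_op_diff_upper_bound:
  fixes T :: "'a::banach_lattice \<Rightarrow> 'a"
  assumes conv: "convex_op T"
    and bnd: "\<And>z. norm (z - c) \<le> R \<Longrightarrow> norm (T z) \<le> M"
    and x: "norm (x - c) \<le> r" and y: "norm (y - c) \<le> R" and "r < R"
  shows "\<exists>u. T x - T y \<le> u \<and> norm u \<le> 2 * M * norm (x - y) / (R - r)"
proof (cases "x = y")
  case True
  then show ?thesis by (intro exI[of _ 0]) simp
next
  case False
  define d \<delta> where "d = norm (x - y)" and "\<delta> = R - r"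
  have "d > 0" "\<delta> > 0" using False \<open>r < R\<close> by (simp_all add: d_def \<delta>_def)
  define l where "l = d / (d + \<delta>)"
  have l: "0 \<le> l" "l \<le> 1" "l \<le> d / \<delta>" "l * (\<delta> / d) = 1 - l"
    using \<open>d > 0\<close> \<open>\<delta> > 0\<close> by (auto simp: l_def field_simps frac_le)
  \<comment> \<open>x lies on the segment from y to the point z at distance \<delta> beyond x\<close>
  define z where "z = x + (\<delta> / d) *\<^sub>R (x - y)"
  have "l *\<^sub>R z + (1 - l) *\<^sub>R y = l *\<^sub>R x + (l * (\<delta> / d)) *\<^sub>R (x - y) + (1 - l) *\<^sub>R y"
    by (simp add: z_def scaleR_add_right)
  also have "\<dots> = x" unfolding l(4) by (simp add: algebra_simps)
  finally have x_eq: "l *\<^sub>R z + (1 - l) *\<^sub>R y = x" .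
  have le: "T x - T y \<le> l *\<^sub>R (T z - T y)"
    using convex_op_diff_le[OF conv l(1,2) x_eq[symmetric]] .
  have "norm (z - c) \<le> norm (x - c) + norm ((\<delta> / d) *\<^sub>R (x - y))"
    unfolding z_def by (metis add_diff_eq diff_add_eq add.commute norm_triangle_ineq)
  also have "norm ((\<delta> / d) *\<^sub>R (x - y)) = \<delta>"
    using \<open>d > 0\<close> \<open>\<delta> > 0\<close> by (simp add: d_def)
  finally have "norm (z - c) \<le> R" using x by (simp add: \<delta>_def)
  then have TzTy: "norm (T z - T y) \<le> 2 * M"
    using norm_triangle_ineq4[of "T z" "T y"] bnd[of z] bnd[OF y] by linarith
  have "norm (l *\<^sub>R (T z - T y)) \<le> d / \<delta> * (2 * M)"
    using mult_mono[OF l(3) TzTy] \<open>d > 0\<close> \<open>\<delta> > 0\<close> l(1) by simp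
  with le show ?thesis by (intro exI[of _ "l *\<^sub>R (T z - T y)"]) (simp add: d_def \<delta>_def mult_ac)
qed

lemma convex_op_Lipschitz_on_ball:
  fixes T :: "'a::banach_lattice \<Rightarrow> 'a"
  assumes conv: "convex_op T"
    and bnd: "\<And>z. norm (z - c) \<le> R \<Longrightarrow> norm (T z) \<le> M"
    and x: "norm (x - c) \<le> r" and y: "norm (y - c) \<le> r" and "r < R"
  shows "norm (T x - T y) \<le> 4 * M * norm (x - y) / (R - r)"
proof -
  obtain u where u: "T x - T y \<le> u" "norm u \<le> 2 * M * norm (x - y) / (R - r)"
    using convex_op_diff_upper_bound[of T c R M x r y, OF conv bnd x _ \<open>r < R\<close>] y \<open>r < R\<close>
    by fastforce
  obtain v where v: "T y - T x \<le> v" "norm v \<le> 2 * M * norm (y - x) / (R - r)"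
    using convex_op_diff_upper_bound[of T c R M y r x, OF conv bnd y _ \<open>r < R\<close>] x \<open>r < R\<close>
    by fastforce
  have "- v \<le> T x - T y" using v(1) by (simp add: algebra_simps)
  then have "norm (T x - T y) \<le> norm (- v) + norm u"
    using norm_le_norm_add_if_between u(1) by blast
  with u(2) v(2) show ?thesis by (simp add: norm_minus_commute)
qed

lemma Lim_Lipschitz_comparison:
  fixes f :: "'b \<Rightarrow> 'a::real_normed_vector" and g :: "'b \<Rightarrow> 'c::real_normed_vector"
  assumes "(g \<longlongrightarrow> b) F" "\<forall>\<^sub>F h in F. norm (f h - a) \<le> L * norm (g h - b)"
  shows "(f \<longlongrightarrow> a) F"
proof -
  have "((\<lambda>h. L * norm (g h - b)) \<longlongrightarrow> L * 0) F"
    using assms(1) by (intro tendsto_mult_left tendsto_norm_zero LIM_zero)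
  then have "((\<lambda>h. f h - a) \<longlongrightarrow> 0) F"
    using assms(2) Lim_null_comparison by force
  then show ?thesis by (rule LIM_zero_cancel)
qed

lemma convex_bounded_op_isCont:
  fixes T :: "'a::banach_lattice \<Rightarrow> 'a"
  assumes "convex_op T" "bounded_op T"
  shows "isCont T x"
proof -
  obtain M where M: "\<And>z. norm z \<le> norm x + 2 \<Longrightarrow> norm (T z) \<le> M"
    using assms(2) unfolding bounded_op_def
    by (metis add_nonneg_pos norm_ge_zero zero_less_numeral)
  have bnd: "norm (T z) \<le> M" if "norm (z - x) \<le> 2" for z
    using M norm_triangle_ineq2[of z x] that by simp
  have "norm (T y - T x) \<le> 4 * M * norm (y - x) / (2 - 1)" if "norm (y - x) \<le> 1" for y
    by (rule convex_op_Lipschitz_on_ball[of T x 2 M y 1 x, OF assms(1) bnd]) (use that in simp_all)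
  moreover have "\<forall>\<^sub>F y in at x. norm (y - x) \<le> 1"
    using eventually_at[of "\<lambda>y. norm (y - x) \<le> 1" x UNIV]
    by (metis dist_norm less_eq_real_def zero_less_one)
  ultimately have "\<forall>\<^sub>F y in at x. norm (T y - T x) \<le> 4 * M * norm (y - x)"
    by (auto elim: eventually_mono)
  then show ?thesis
    unfolding isCont_def by (rule Lim_Lipschitz_comparison[OF tendsto_ident_at])
qed

lemma Baire_closed_cover_nat:
  fixes F :: "nat \<Rightarrow> 'a::banach set"
  assumes "\<And>n. closed (F n)" "\<And>y. \<exists>n. y \<in> F n"
  shows "\<exists>n. interior (F n) \<noteq> {}"
proof (rule ccontr)
  assume "\<not> ?thesis"
  then have "euclidean interior_of \<Union>(range F) = {}"
    by (intro Baire_category_alt)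
      (auto simp: completely_metrizable_space_euclidean assms(1) closed_closedin[symmetric])
  moreover have "\<Union>(range F) = UNIV" using assms(2) by blast
  ultimately show False by simp
qed

lemma convex_op_bound_transfer:
  fixes T :: "'a::banach_lattice \<Rightarrow> 'a"
  assumes conv: "convex_op T"
    and ball: "\<And>z. norm (z - y0) \<le> \<epsilon> \<Longrightarrow> norm (T z) \<le> N"
    and refl: "norm (T (2 *\<^sub>R x - y0)) \<le> m" and centre: "norm (T x) \<le> k"
    and y: "norm (y - x) \<le> \<epsilon> / 2"
  shows "norm (T y) \<le> 2 * k + m + N"
proof -
  have upper: "\<exists>c. T y' \<le> c \<and> norm c \<le> (m + N) / 2" if y': "norm (y' - x) \<le> \<epsilon> / 2" for y'
  proof -
    define z where "z = y0 + 2 *\<^sub>R (y' - x)"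
    define c where "c = (1/2::real) *\<^sub>R (T (2 *\<^sub>R x - y0) + T z)"
    have "2 *\<^sub>R T y' \<le> T (2 *\<^sub>R x - y0) + T z"
      by (rule convex_op_midpoint[OF conv]) (simp add: z_def algebra_simps)
    then have "(1/2::real) *\<^sub>R (2 *\<^sub>R T y') \<le> c"
      unfolding c_def by (rule scaleR_left_mono) simp
    moreover have "norm (T z) \<le> N" using y' by (intro ball) (simp add: z_def)
    then have "norm c \<le> (m + N) / 2"
      using refl norm_triangle_ineq[of "T (2 *\<^sub>R x - y0)" "T z"] by (simp add: c_def)
    ultimately show ?thesis by auto
  qed
  obtain c where c: "T y \<le> c" "norm c \<le> (m + N) / 2" using upper[OF y] by blast
  have "norm ((2 *\<^sub>R x - y) - x) \<le> \<epsilon> / 2"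
    using y by (simp add: scaleR_2 norm_minus_commute)
  then obtain c' where c': "T (2 *\<^sub>R x - y) \<le> c'" "norm c' \<le> (m + N) / 2"
    using upper by blast
  have "2 *\<^sub>R T x \<le> T y + T (2 *\<^sub>R x - y)"
    by (rule convex_op_midpoint[OF conv]) simp
  with c'(1) have "2 *\<^sub>R T x - c' \<le> T y"
    by (metis add_left_mono diff_le_eq order.trans)
  then have "norm (T y) \<le> norm (2 *\<^sub>R T x - c') + norm c"
    using norm_le_norm_add_if_between c(1) by blast
  also have "\<dots> \<le> 2 * k + (m + N) / 2 + (m + N) / 2"
    using norm_triangle_ineq4[of "2 *\<^sub>R T x" c'] centre c(2) c'(2) by simp
  finally show ?thesis by simp
qed

context
  fixes S :: "real \<Rightarrow> 'a::banach_lattice \<Rightarrow> 'a"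
  assumes S: "convex_C0_semigroup S"
begin

lemma convex_C0_semigroup_convex: "0 \<le> t \<Longrightarrow> convex_op (S t)"
  using S by (simp add: convex_C0_semigroup_def)

lemma convex_C0_semigroup_isCont: "0 \<le> t \<Longrightarrow> isCont (S t) x"
  using S by (simp add: convex_C0_semigroup_def convex_bounded_op_isCont)

lemma convex_C0_semigroup_zero: "S 0 x = x"
  using S by (simp add: convex_C0_semigroup_def)

lemma convex_C0_semigroup_add: "0 \<le> s \<Longrightarrow> 0 \<le> t \<Longrightarrow> S (s + t) x = S s (S t x)"
  using S by (simp add: convex_C0_semigroup_def)

lemma convex_C0_semigroup_strongly_continuous: "((\<lambda>t. S t x) \<longlongrightarrow> x) (at_right 0)"
  using S by (simp add: convex_C0_semigroup_def)

lemma convex_C0_semigroup_bounded_near_zero: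
  "\<exists>n. \<forall>s\<in>{0..1 / real (Suc n)}. norm (S s y) \<le> real n"
proof -
  obtain b where b: "b > 0" "\<And>t. 0 < t \<Longrightarrow> t < b \<Longrightarrow> dist (S t y) y < 1"
    using tendstoD[OF convex_C0_semigroup_strongly_continuous zero_less_one]
    by (auto simp: eventually_at_right_field)
  obtain n where n: "max (1 / b) (norm y + 1) < real n" using reals_Archimedean2 by blast
  have small: "1 / real (Suc n) < b"
    using n b(1) by (simp add: field_simps)
  have "norm (S s y) \<le> norm y + 1" if "s \<in> {0..1 / real (Suc n)}" for s
  proof (cases "s = 0")
    case True
    then show ?thesis by (simp add: convex_C0_semigroup_zero)
  next
    case False
    then have "dist (S s y) y < 1" using that small b by auto
    then show ?thesis using norm_triangle_ineq2[of "S s y" y] by (simp add: dist_norm)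
  qed
  then show ?thesis using n by (intro exI[of _ n]) force
qed

lemma convex_C0_semigroup_bounded_on_ball:
  "\<exists>y0 \<epsilon> \<delta> N. 0 < \<epsilon> \<and> 0 < \<delta> \<and>
    (\<forall>s\<in>{0..\<delta>}. \<forall>z. norm (z - y0) \<le> \<epsilon> \<longrightarrow> norm (S s z) \<le> N)"
proof -
  define F where "F n = (\<Inter>s\<in>{0..1 / real (Suc n)}. {y. norm (S s y) \<le> real n})" for n
  have "closed {y. norm (S s y) \<le> real n}" if "0 \<le> s" for s n
  proof -
    have "continuous_on UNIV (S s)"
      using that by (simp add: continuous_at_imp_continuous_on convex_C0_semigroup_isCont)
    then show ?thesis by (intro closed_Collect_le continuous_intros) (auto intro: continuous_on_norm)
  qed
  then have "closed (F n)" for n by (auto simp: F_def)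
  moreover have "\<exists>n. y \<in> F n" for y
    using convex_C0_semigroup_bounded_near_zero[of y] by (auto simp: F_def)
  ultimately obtain n where "interior (F n) \<noteq> {}" using Baire_closed_cover_nat by metis
  then obtain y0 \<epsilon> where "\<epsilon> > 0" "ball y0 \<epsilon> \<subseteq> F n" by (meson ex_in_conv mem_interior)
  then have "norm (S s z) \<le> real n" if "s \<in> {0..1 / real (Suc n)}" "norm (z - y0) \<le> \<epsilon> / 2" for s z
    using that by (auto simp: F_def dist_norm norm_minus_commute subset_iff)
  with \<open>\<epsilon> > 0\<close> show ?thesis
    by (intro exI[of _ y0] exI[of _ "\<epsilon> / 2"] exI[of _ "1 / real (Suc n)"] exI[of _ "real n"]) auto
qed

lemma convex_C0_semigroup_locally_uniformly_Lipschitz: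
  "\<exists>\<delta>>0. \<exists>\<rho>>0. \<exists>L. \<forall>s\<in>{0..\<delta>}. \<forall>y. norm (y - x) \<le> \<rho> \<longrightarrow>
      norm (S s y - S s x) \<le> L * norm (y - x)"
proof -
  obtain y0 \<epsilon> \<delta>0 N where "0 < \<epsilon>" "0 < \<delta>0"
    and N: "\<And>s z. s \<in> {0..\<delta>0} \<Longrightarrow> norm (z - y0) \<le> \<epsilon> \<Longrightarrow> norm (S s z) \<le> N"
    using convex_C0_semigroup_bounded_on_ball by blast
  obtain m where m: "\<forall>s\<in>{0..1 / real (Suc m)}. norm (S s (2 *\<^sub>R x - y0)) \<le> real m"
    using convex_C0_semigroup_bounded_near_zero by blast
  obtain k where k: "\<forall>s\<in>{0..1 / real (Suc k)}. norm (S s x) \<le> real k"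
    using convex_C0_semigroup_bounded_near_zero by blast
  define \<delta> where "\<delta> = min \<delta>0 (min (1 / real (Suc m)) (1 / real (Suc k)))"
  define M where "M = 2 * real k + real m + N"
  have bnd: "norm (S s y) \<le> M" if "s \<in> {0..\<delta>}" "norm (y - x) \<le> \<epsilon> / 2" for s y
    unfolding M_def
  proof (rule convex_op_bound_transfer[of "S s" y0 \<epsilon> N x "real m" "real k" y])
    show "convex_op (S s)" using that by (intro convex_C0_semigroup_convex) simp
    show "norm (S s z) \<le> N" if "norm (z - y0) \<le> \<epsilon>" for z
      using N[OF _ that] \<open>s \<in> {0..\<delta>}\<close> by (simp add: \<delta>_def)
  qed (use that m k in \<open>auto simp: \<delta>_def\<close>)
  have "norm (S s y - S s x) \<le> 4 * M * norm (y - x) / (\<epsilon> / 2 - \<epsilon> / 4)"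
    if "s \<in> {0..\<delta>}" "norm (y - x) \<le> \<epsilon> / 4" for s y
    using that \<open>0 < \<epsilon>\<close>
    by (intro convex_op_Lipschitz_on_ball[of "S s" x "\<epsilon> / 2" M]
        convex_C0_semigroup_convex bnd) auto
  then have "\<forall>s\<in>{0..\<delta>}. \<forall>y. norm (y - x) \<le> \<epsilon> / 4 \<longrightarrow>
      norm (S s y - S s x) \<le> (4 * M / (\<epsilon> / 2 - \<epsilon> / 4)) * norm (y - x)"
    by (simp add: mult.assoc)
  moreover have "0 < \<delta>" "0 < \<epsilon> / 4" using \<open>0 < \<epsilon>\<close> \<open>0 < \<delta>0\<close> by (simp_all add: \<delta>_def)
  ultimately show ?thesis by blast
qed

lemma convex_C0_semigroup_continuous_from_right:
  assumes "0 \<le> t"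
  shows "((\<lambda>s. S s x) \<longlongrightarrow> S t x) (at_right t)"
proof -
  have "((\<lambda>h. S t (S h x)) \<longlongrightarrow> S t x) (at_right 0)"
    by (rule isCont_tendsto_compose[OF convex_C0_semigroup_isCont[OF assms]
          convex_C0_semigroup_strongly_continuous])
  moreover have "\<forall>\<^sub>F h in at_right 0. S t (S h x) = S (h + t) x"
    using assms convex_C0_semigroup_add[of t _ x]
    by (auto simp: eventually_at_right_field add.commute intro!: exI[of _ 1])
  ultimately have "((\<lambda>h. S (h + t) x) \<longlongrightarrow> S t x) (at_right 0)"
    by (rule Lim_transform_eventually)
  then show ?thesis by (simp add: at_right_to_0[of t] filterlim_filtermap)
qed

lemma convex_C0_semigroup_continuous_from_left_near_zero:
  "\<exists>\<delta>>0. \<forall>t\<in>{0<..\<delta>}. ((\<lambda>s. S s x) \<longlongrightarrow> S t x) (at_left t)"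
proof -
  obtain \<delta> \<rho> L where "0 < \<delta>" "0 < \<rho>"
    and L: "\<And>s y. s \<in> {0..\<delta>} \<Longrightarrow> norm (y - x) \<le> \<rho> \<Longrightarrow>
      norm (S s y - S s x) \<le> L * norm (y - x)"
    using convex_C0_semigroup_locally_uniformly_Lipschitz[of x] by blast
  have "((\<lambda>s. S s x) \<longlongrightarrow> S t x) (at_left t)" if t: "0 < t" "t \<le> \<delta>" for t
  proof -
    have "((\<lambda>s. t - s) \<longlongrightarrow> t - t) (at_left t)"
      by (intro tendsto_intros)
    moreover have "\<forall>\<^sub>F s in at_left t. t - s \<in> {0<..}"
      by (auto simp: eventually_at_left_field intro!: exI[of _ 0] t)
    ultimately have "filterlim (\<lambda>s. t - s) (at_right 0) (at_left t)"
      by (simp add: filterlim_at eventually_mono)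
    then have lim: "((\<lambda>s. S (t - s) x) \<longlongrightarrow> x) (at_left t)"
      by (rule filterlim_compose[OF convex_C0_semigroup_strongly_continuous])
    have "\<forall>\<^sub>F s in at_left t. norm (S (t - s) x - x) \<le> \<rho>"
      using tendstoD[OF lim \<open>0 < \<rho>\<close>] by (rule eventually_mono) (simp add: dist_norm)
    moreover have "\<forall>\<^sub>F s in at_left t. 0 < s \<and> s < t"
      by (auto simp: eventually_at_left_field intro!: exI[of _ 0] t)
    ultimately have "\<forall>\<^sub>F s in at_left t. norm (S s x - S t x) \<le> L * norm (S (t - s) x - x)"
    proof eventually_elim
      case (elim s)
      then have "S t x = S s (S (t - s) x)"
        using convex_C0_semigroup_add[of s "t - s" x] by simp
      then show ?case
        using L[of s "S (t - s) x"] elim t by (simp add: norm_minus_commute)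
    qed
    then show ?thesis by (rule Lim_Lipschitz_comparison[OF lim])
  qed
  with \<open>0 < \<delta>\<close> show ?thesis by auto
qed

lemma convex_C0_semigroup_continuous_from_left:
  assumes "0 < t"
  shows "((\<lambda>s. S s x) \<longlongrightarrow> S t x) (at_left t)"
proof -
  obtain \<delta> where "0 < \<delta>"
    and near_zero: "\<And>t'. t' \<in> {0<..\<delta>} \<Longrightarrow> ((\<lambda>s. S s x) \<longlongrightarrow> S t' x) (at_left t')"
    using convex_C0_semigroup_continuous_from_left_near_zero by blast
  \<comment> \<open>S s x = S a (S (s - a) x) reduces left continuity at t to left continuity at t' \<le> \<delta>\<close>
  define t' where "t' = min \<delta> t / 2"
  define a where "a = t - t'"
  have "0 < t'" "t' \<le> \<delta>" "0 < a" using assms \<open>0 < \<delta>\<close> by (auto simp: t'_def a_def)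
  have "((\<lambda>s. s - a) \<longlongrightarrow> t - a) (at_left t)"
    by (intro tendsto_intros)
  moreover have "\<forall>\<^sub>F s in at_left t. s - a \<in> {..<t'}"
    by (auto simp: eventually_at_left_field a_def intro!: exI[of _ 0] assms)
  ultimately have shift: "filterlim (\<lambda>s. s - a) (at_left t') (at_left t)"
    by (simp add: filterlim_at eventually_mono a_def)
  have "((\<lambda>s. S s x) \<longlongrightarrow> S t' x) (at_left t')"
    using near_zero \<open>0 < t'\<close> \<open>t' \<le> \<delta>\<close> by simp
  then have "((\<lambda>s. S (s - a) x) \<longlongrightarrow> S t' x) (at_left t)"
    using shift by (rule filterlim_compose)
  then have "((\<lambda>s. S a (S (s - a) x)) \<longlongrightarrow> S a (S t' x)) (at_left t)"
    using \<open>0 < a\<close> by (intro isCont_tendsto_compose[OF convex_C0_semigroup_isCont]) simp_all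
  moreover have "S a (S t' x) = S t x"
    using convex_C0_semigroup_add[of a t' x] \<open>0 < a\<close> \<open>0 < t'\<close> by (simp add: a_def)
  ultimately have "((\<lambda>s. S a (S (s - a) x)) \<longlongrightarrow> S t x) (at_left t)" by simp
  moreover have "\<forall>\<^sub>F s in at_left t. a < s"
    using \<open>0 < t'\<close> by (auto simp: eventually_at_left_field a_def intro!: exI[of _ a])
  then have "\<forall>\<^sub>F s in at_left t. S a (S (s - a) x) = S s x"
    by (rule eventually_mono) (use convex_C0_semigroup_add[of a "_ - a" x] \<open>0 < a\<close> in simp)
  ultimately show ?thesis by (rule Lim_transform_eventually)
qed

end

theorem corollary2p5:
  fixes S :: "real \<Rightarrow> 'a::banach_lattice \<Rightarrow> 'a"
  assumes "convex_C0_semigroup S"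
  shows "\<forall>x. continuous_on {0..} (\<lambda>t. S t x)"
  unfolding continuous_on_def
proof (intro allI ballI)
  fix x and t :: real
  assume "t \<in> {0..}"
  show "((\<lambda>t. S t x) \<longlongrightarrow> S t x) (at t within {0..})"
  proof (cases "t = 0")
    case True
    then show ?thesis
      using convex_C0_semigroup_continuous_from_right[OF assms, of 0 x]
      by (simp add: at_within_Ici_at_right)
  next
    case False
    with \<open>t \<in> {0..}\<close> have "((\<lambda>t. S t x) \<longlongrightarrow> S t x) (at t)"
      by (intro filterlim_split_at convex_C0_semigroup_continuous_from_left[OF assms]
          convex_C0_semigroup_continuous_from_right[OF assms]) auto
    then show ?thesis by (rule tendsto_within_subset) simp
  qed
qed

end
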